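(* For every $m\ge1$, the cardinality sensitivity of affine maximizers for $2$ players and $m$ items is $\mu_c(2,m)=1$.
   Context: Players $[n]$, items $[m]$, allocations $\Omega=\{A\in\{0,1\}^{n\times m}:\sum_iA_{i,j}=1\ \forall j\}$; $A_i\in\{0,1\}^m$ denotes the bundle (row) of player $i$. An affine maximizer is $f:\mathbb R^{n\times m}\to\Omega$ with $f(\theta)\in\arg\max_{A\in\Omega}\{c_A+\sum_iw_i\theta_i\cdot A_i\}$ for nonzero weights $w_i$ and reals $c_A$. Difference sets $Q_A=\mathrm{cl}\{\theta:f(\theta)=A\}$; indifference complex $\mathcal I(f)=\{\mathcal O\subseteq\Omega:\bigcap_{A\in\mathcal O}Q_A\ne\emptyset\}$. Let $\Psi_{(n,m)}$ be the set of indifference complexes of affine maximizers. With $\mathrm{Cd}(a,b)=\big||a|_1-|b|_1\big|$, define $\mu_c(n,m)=\min_{\mathcal I\in\Psi_{(n,m)}}\max\{\mathrm{Cd}(A_i,B_i): A,B\in F\text{ for some }F\in\mathcal I,\ i\in[n]\}$. *)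

theory Defs
  imports "HOL-Analysis.Analysis"
begin

text \<open>Players are 0..<n, items are 0..<m. Matrices are functions nat => nat => _,
  required to vanish outside [n] x [m]. Row i of a matrix is the bundle of player i.\<close>

type_synonym alloc = "nat \<Rightarrow> nat \<Rightarrow> nat"
type_synonym valuation = "nat \<Rightarrow> nat \<Rightarrow> real"

definition allocations :: "nat \<Rightarrow> nat \<Rightarrow> alloc set" where
  "allocations n m = {A. (\<forall>i j. A i j \<in> {0, 1})
       \<and> (\<forall>i j. \<not> (i < n \<and> j < m) \<longrightarrow> A i j = 0)
       \<and> (\<forall>j<m. (\<Sum>i<n. A i j) = 1)}"

definition valuations :: "nat \<Rightarrow> nat \<Rightarrow> valuation set" where
  "valuations n m = {\<theta>. \<forall>i j. \<not> (i < n \<and> j < m) \<longrightarrow> \<theta> i j = 0}"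

definition affine_maximizer :: "nat \<Rightarrow> nat \<Rightarrow> (valuation \<Rightarrow> alloc) \<Rightarrow> bool" where
  "affine_maximizer n m f \<longleftrightarrow>
     (\<exists>(w :: nat \<Rightarrow> real) (c :: alloc \<Rightarrow> real).
        (\<forall>i<n. w i \<noteq> 0) \<and>
        (\<forall>\<theta>\<in>valuations n m. f \<theta> \<in> allocations n m \<and>
           (\<forall>B\<in>allocations n m.
              c B + (\<Sum>i<n. w i * (\<Sum>j<m. \<theta> i j * real (B i j)))
              \<le> c (f \<theta>) + (\<Sum>i<n. w i * (\<Sum>j<m. \<theta> i j * real (f \<theta> i j))))))"

definition diff_set :: "nat \<Rightarrow> nat \<Rightarrow> (valuation \<Rightarrow> alloc) \<Rightarrow> alloc \<Rightarrow> valuation set" where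
  "diff_set n m f A = closure {\<theta> \<in> valuations n m. f \<theta> = A}"

definition indiff_complex :: "nat \<Rightarrow> nat \<Rightarrow> (valuation \<Rightarrow> alloc) \<Rightarrow> alloc set set" where
  "indiff_complex n m f =
     {S. S \<subseteq> allocations n m \<and> (\<Inter>A\<in>S. diff_set n m f A) \<noteq> {}}"

definition Psi :: "nat \<Rightarrow> nat \<Rightarrow> alloc set set set" where
  "Psi n m = {indiff_complex n m f | f. affine_maximizer n m f}"

definition Cd :: "nat \<Rightarrow> alloc \<Rightarrow> alloc \<Rightarrow> nat \<Rightarrow> nat" where
  "Cd m A B i = nat \<bar>int (\<Sum>j<m. A i j) - int (\<Sum>j<m. B i j)\<bar>"

definition complex_card_sens :: "nat \<Rightarrow> nat \<Rightarrow> alloc set set \<Rightarrow> nat" where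
  "complex_card_sens n m I =
     Sup {Cd m A B i | A B F i. F \<in> I \<and> A \<in> F \<and> B \<in> F \<and> i < n}"

definition mu_c :: "nat \<Rightarrow> nat \<Rightarrow> nat" where
  "mu_c n m = Inf (complex_card_sens n m ` Psi n m)"

end

theory Submission
  imports Defs
begin

text \<open>Lower bound: on the line of valuations where only player 0 has nonzero values, all equal
  to t / w 0, an affine maximizer maximizes c A + t |A 0|. For t large it gives player 0 all m
  items, for t very negative it does not; since the line is connected and there are finitely
  many difference sets, some valuation lies in the closure of both kinds of choices, which
  yields a face with cardinality difference at least 1.

  Upper bound: the affine maximizer with unit weights and c A = -|A 0|^2 adds a strictly convex
  penalty to a welfare that is modular in player 0's bundle. If two bundles S, T with
  |T| \<ge> |S| + 2 were optimal at the same valuation, moving an item of T - S into S would keep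
  the modular part and strictly lower the penalty. Optimality survives taking closures, so all
  allocations in a face give each player bundles whose sizes differ by at most one.\<close>

abbreviation bundle_size :: "nat \<Rightarrow> alloc \<Rightarrow> nat \<Rightarrow> nat" where
  "bundle_size m A i \<equiv> \<Sum>j<m. A i j"

lemma allocation_entry: "A \<in> allocations n m \<Longrightarrow> A i j \<in> {0, 1}"
  by (simp add: allocations_def)

lemma allocation_entry_le_1: "A \<in> allocations n m \<Longrightarrow> A i j \<le> 1"
  using allocation_entry[of A n m i j] by auto

lemma bundle_size_le: "A \<in> allocations n m \<Longrightarrow> bundle_size m A i \<le> m"
  using sum_mono[of "{..<m}" "A i" "\<lambda>_. 1"] allocation_entry_le_1 by fastforce

lemma Cd_le: "A \<in> allocations n m \<Longrightarrow> B \<in> allocations n m \<Longrightarrow> Cd m A B i \<le> m"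
  unfolding Cd_def using bundle_size_le[of A n m i] bundle_size_le[of B n m i] by linarith

lemma finite_allocations: "finite (allocations n m)"
proof -
  let ?restr = "\<lambda>A. restrict (\<lambda>(i, j). A i j) ({..<n} \<times> {..<m})"
  have inj: "inj_on ?restr (allocations n m)"
  proof (rule inj_onI, intro ext)
    fix A B i j
    assume "A \<in> allocations n m" "B \<in> allocations n m" and eq: "?restr A = ?restr B"
    show "A i j = B i j"
    proof (cases "i < n \<and> j < m")
      case True
      then show ?thesis using fun_cong[OF eq, of "(i, j)"] by simp
    next
      case False
      with \<open>A \<in> allocations n m\<close> \<open>B \<in> allocations n m\<close> show ?thesis
        unfolding allocations_def by simp
    qed
  qed
  have into: "?restr ` allocations n m \<subseteq> ({..<n} \<times> {..<m}) \<rightarrow>\<^sub>E {0, 1}"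
  proof (rule image_subsetI, rule PiE_I)
    fix A and x :: "nat \<times> nat"
    assume "A \<in> allocations n m" and "x \<in> {..<n} \<times> {..<m}"
    then show "?restr A x \<in> {0, 1}"
      using allocation_entry[of A n m "fst x" "snd x"] by (simp add: case_prod_beta)
  qed simp
  have "finite (({..<n} \<times> {..<m}) \<rightarrow>\<^sub>E {0::nat, 1})"
    by (intro finite_PiE) auto
  then show ?thesis
    using finite_imageD[OF finite_subset[OF into] inj] by blast
qed

lemma Cd_le_complex_card_sens:
  assumes "F \<in> indiff_complex n m f" "A \<in> F" "B \<in> F" "i < n"
  shows "Cd m A B i \<le> complex_card_sens n m (indiff_complex n m f)"
  unfolding complex_card_sens_def
proof (rule cSup_upper)
  show "Cd m A B i \<in> {Cd m A B i | A B F i. F \<in> indiff_complex n m f \<and> A \<in> F \<and> B \<in> F \<and> i < n}"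
    using assms by blast
  show "bdd_above {Cd m A B i | A B F i. F \<in> indiff_complex n m f \<and> A \<in> F \<and> B \<in> F \<and> i < n}"
  proof (rule bdd_aboveI)
    fix x assume "x \<in> {Cd m A B i | A B F i. F \<in> indiff_complex n m f \<and> A \<in> F \<and> B \<in> F \<and> i < n}"
    then obtain A B F i where "x = Cd m A B i" "F \<in> indiff_complex n m f" "A \<in> F" "B \<in> F"
      by blast
    then show "x \<le> m" using Cd_le[of A n m B i] by (auto simp: indiff_complex_def)
  qed
qed

lemma closed_diff_set: "closed (diff_set n m f A)"
  unfolding diff_set_def by simp

lemma mem_diff_set_self: "\<theta> \<in> valuations n m \<Longrightarrow> \<theta> \<in> diff_set n m f (f \<theta>)"
  unfolding diff_set_def by (rule closure_subset[THEN subsetD]) simp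

lemma indiff_complex_pair_across_connected:
  assumes "connected S" "S \<subseteq> valuations n m" "f ` S \<subseteq> allocations n m"
    and "\<theta> \<in> S" "P (f \<theta>)" "\<theta>' \<in> S" "\<not> P (f \<theta>')"
  obtains A B where "{A, B} \<in> indiff_complex n m f" "P A" "\<not> P B"
proof -
  define E where "E Q = (\<Union>A\<in>{A \<in> f ` S. Q A}. diff_set n m f A)" for Q
  have closed_E: "closed (E Q)" for Q
    unfolding E_def using finite_subset[OF _ finite_allocations] assms(3)
    by (intro closed_UN) (auto simp: closed_diff_set)
  have mem_E: "\<xi> \<in> E Q" if "\<xi> \<in> S" "Q (f \<xi>)" for \<xi> Q
    unfolding E_def using that assms(2) mem_diff_set_self by (intro UN_I[of "f \<xi>"]) auto
  define N where "N = (\<lambda>A. \<not> P A)"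
  have cover: "S \<subseteq> E P \<union> E N"
    using mem_E[of _ P] mem_E[of _ N] unfolding N_def by blast
  have meet: "E P \<inter> S \<noteq> {}" "E N \<inter> S \<noteq> {}"
    using mem_E[of \<theta> P] mem_E[of \<theta>' N] assms(4-7) unfolding N_def by blast+
  have "E P \<inter> E N \<inter> S \<noteq> {}"
  proof
    assume "E P \<inter> E N \<inter> S = {}"
    with closed_E[of P] closed_E[of N] cover meet
    have "\<exists>A B. closed A \<and> closed B \<and> S \<subseteq> A \<union> B \<and> A \<inter> B \<inter> S = {} \<and> A \<inter> S \<noteq> {} \<and> B \<inter> S \<noteq> {}"
      by (intro exI[of _ "E P"] exI[of _ "E N"]) simp
    with \<open>connected S\<close> show False unfolding connected_closed by contradiction
  qed
  then obtain \<xi> A B where "A \<in> f ` S" "P A" "\<xi> \<in> diff_set n m f A"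
    and "B \<in> f ` S" "\<not> P B" "\<xi> \<in> diff_set n m f B"
    unfolding E_def N_def by blast
  with assms(3) have "{A, B} \<in> indiff_complex n m f" "P A" "\<not> P B"
    unfolding indiff_complex_def by auto
  then show ?thesis by (rule that)
qed

definition give_all :: "nat \<Rightarrow> nat \<Rightarrow> alloc" where
  "give_all m k = (\<lambda>i j. if i = k \<and> j < m then 1 else 0)"

lemma give_all_in_allocations: "k < n \<Longrightarrow> give_all m k \<in> allocations n m"
  unfolding allocations_def give_all_def by auto

lemma bundle_size_give_all: "bundle_size m (give_all m k) i = (if i = k then m else 0)"
  unfolding give_all_def by simp

lemma finite_ex_bound_differences:
  fixes c :: "'a \<Rightarrow> real"
  assumes "finite X"
  obtains D where "0 < D" "\<And>A B. A \<in> X \<Longrightarrow> B \<in> X \<Longrightarrow> c A - c B < D"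
proof
  let ?K = "\<Sum>A\<in>X. \<bar>c A\<bar>"
  have bound: "\<bar>c A\<bar> \<le> ?K" if "A \<in> X" for A
    using member_le_sum[OF that _ assms, of "\<lambda>A. \<bar>c A\<bar>"] by simp
  have "0 \<le> ?K" by (simp add: sum_nonneg)
  then show "0 < 2 * ?K + 1" by linarith
  show "c A - c B < 2 * ?K + 1" if "A \<in> X" "B \<in> X" for A B
    using bound[OF that(1)] bound[OF that(2)] by linarith
qed

lemma nat_le_of_weighted_le:
  fixes a b :: nat and ca cb t :: real
  assumes "cb + t * b \<le> ca + t * a" "ca - cb < t" "0 \<le> t"
  shows "b \<le> a"
proof (rule ccontr)
  assume "\<not> b \<le> a"
  then have "t * (real a + 1) \<le> t * real b"
    using assms by (intro mult_left_mono) auto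
  with assms show False by (simp add: algebra_simps)
qed

lemma affine_maximizer_on_player0_line:
  assumes "affine_maximizer n m f" "0 < n"
  obtains c :: "alloc \<Rightarrow> real" and line :: "real \<Rightarrow> valuation"
  where "continuous_on UNIV line" "\<And>t. line t \<in> valuations n m" "\<And>t. f (line t) \<in> allocations n m"
    and "\<And>t B. B \<in> allocations n m \<Longrightarrow>
      c B + t * real (bundle_size m B 0) \<le> c (f (line t)) + t * real (bundle_size m (f (line t)) 0)"
proof -
  obtain w c where w: "\<forall>i<n. w i \<noteq> 0" and opt: "\<forall>\<theta>\<in>valuations n m.
      f \<theta> \<in> allocations n m \<and> (\<forall>B\<in>allocations n m.
        c B + (\<Sum>i<n. w i * (\<Sum>j<m. \<theta> i j * real (B i j)))
        \<le> c (f \<theta>) + (\<Sum>i<n. w i * (\<Sum>j<m. \<theta> i j * real (f \<theta> i j))))"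
    using assms(1) unfolding affine_maximizer_def by blast
  have w0: "w 0 \<noteq> 0" using w assms(2) by simp
  define line :: "real \<Rightarrow> valuation"
    where "line t = (\<lambda>i j. if i = 0 \<and> j < m then t / w 0 else 0)" for t
  have line_val: "line t \<in> valuations n m" for t
    unfolding valuations_def line_def using assms(2) by auto
  have line_welfare: "(\<Sum>i<n. w i * (\<Sum>j<m. line t i j * real (B i j)))
      = t * real (bundle_size m B 0)" for t B
  proof -
    have "(\<Sum>i<n. w i * (\<Sum>j<m. line t i j * real (B i j)))
        = (\<Sum>i<n. if i = 0 then t * real (bundle_size m B 0) else 0)"
      by (rule sum.cong) (auto simp: line_def w0 sum_distrib_left)
    then show ?thesis using assms(2) by simp
  qed
  have "continuous_on UNIV line"
    unfolding line_def
  proof (intro continuous_on_coordinatewise_then_product)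
    fix i j :: nat
    show "continuous_on UNIV (\<lambda>t. if i = 0 \<and> j < m then t / w 0 else 0)"
    proof (cases "i = 0 \<and> j < m")
      case True
      show ?thesis unfolding if_P[OF True]
        by (intro continuous_on_divide continuous_on_id continuous_on_const) (simp add: w0)
    next
      case False
      show ?thesis unfolding if_not_P[OF False] by (rule continuous_on_const)
    qed
  qed
  moreover have "f (line t) \<in> allocations n m"
      "B \<in> allocations n m \<Longrightarrow>
        c B + t * real (bundle_size m B 0)
        \<le> c (f (line t)) + t * real (bundle_size m (f (line t)) 0)" for t B
    using bspec[OF opt line_val[of t]] unfolding line_welfare by blast+
  ultimately show ?thesis using that line_val by blast
qed

lemma complex_card_sens_ge_1:
  assumes "affine_maximizer n m f" "2 \<le> n" "1 \<le> m"
  shows "1 \<le> complex_card_sens n m (indiff_complex n m f)"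
proof -
  obtain c line where line_cont: "continuous_on UNIV line"
    and line_val: "\<And>t. line t \<in> valuations n m" and line_alloc: "\<And>t. f (line t) \<in> allocations n m"
    and line_opt: "\<And>t B. B \<in> allocations n m \<Longrightarrow>
      c B + t * real (bundle_size m B 0) \<le> c (f (line t)) + t * real (bundle_size m (f (line t)) 0)"
    using affine_maximizer_on_player0_line[OF assms(1)] assms(2) by (metis zero_less_numeral order_less_le_trans)
  obtain D where "0 < D"
    and D: "\<And>A B. A \<in> allocations n m \<Longrightarrow> B \<in> allocations n m \<Longrightarrow> c A - c B < D"
    using finite_ex_bound_differences[OF finite_allocations] by blast
  have all: "give_all m 0 \<in> allocations n m" "give_all m 1 \<in> allocations n m"
    using assms(2) by (auto intro: give_all_in_allocations)
  have "m \<le> bundle_size m (f (line D)) 0"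
    using nat_le_of_weighted_le[OF line_opt[OF all(1)] D[OF line_alloc all(1)]] \<open>0 < D\<close>
    by (simp add: bundle_size_give_all)
  then have full: "bundle_size m (f (line D)) 0 = m"
    using bundle_size_le[OF line_alloc] le_antisym by blast
  have "bundle_size m (f (line (-D))) 0 \<le> 0"
    using line_opt[OF all(2), of "-D"] D[OF line_alloc all(2), of "-D"] \<open>0 < D\<close>
    by (intro nat_le_of_weighted_le[of "- c (f (line (-D)))" D _ "- c (give_all m 1)"])
      (simp_all add: bundle_size_give_all)
  then have empty: "bundle_size m (f (line (-D))) 0 \<noteq> m"
    using assms(3) by simp
  have segment: "connected (line ` {-D..D})"
    using line_cont by (intro connected_continuous_image) (auto intro: continuous_on_subset)
  have segment_sub: "line ` {-D..D} \<subseteq> valuations n m" "f ` line ` {-D..D} \<subseteq> allocations n m"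
    using line_val line_alloc by auto
  have ends: "line D \<in> line ` {-D..D}" "line (-D) \<in> line ` {-D..D}"
    using \<open>0 < D\<close> by auto
  obtain A B where face: "{A, B} \<in> indiff_complex n m f"
      and "bundle_size m A 0 = m" "bundle_size m B 0 \<noteq> m"
    by (rule indiff_complex_pair_across_connected[where P = "\<lambda>A. bundle_size m A 0 = m",
          OF segment segment_sub ends(1) _ ends(2)]) (use full empty in simp_all)
  then have "1 \<le> Cd m A B 0" unfolding Cd_def by linarith
  also have "\<dots> \<le> complex_card_sens n m (indiff_complex n m f)"
    using Cd_le_complex_card_sens[OF face] assms(2) by simp
  finally show ?thesis .
qed

definition split_alloc :: "nat \<Rightarrow> nat set \<Rightarrow> alloc" where
  "split_alloc m S = (\<lambda>i j. if j < m \<and> (i = 0 \<and> j \<in> S \<or> i = 1 \<and> j \<notin> S) then 1 else 0)"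

lemma split_alloc_in_allocations: "split_alloc m S \<in> allocations 2 m"
  unfolding allocations_def split_alloc_def by (auto simp: numeral_2_eq_2)

lemma allocation_eq_split_alloc:
  assumes "A \<in> allocations 2 m"
  shows "A = split_alloc m {j. j < m \<and> A 0 j = 1}"
proof (intro ext)
  fix i j
  have entry: "A i j \<in> {0, 1}" "A 0 j \<in> {0, 1}" "A 1 j \<in> {0, 1}"
    using allocation_entry[OF assms] by blast+
  have outside: "\<not> (i < 2 \<and> j < m) \<Longrightarrow> A i j = 0"
    using assms unfolding allocations_def by blast
  have column: "j < m \<Longrightarrow> A 0 j + A 1 j = 1"
    using assms unfolding allocations_def by (simp add: numeral_2_eq_2)
  show "A i j = split_alloc m {j. j < m \<and> A 0 j = 1} i j"
  proof (cases "i < 2 \<and> j < m")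
    case True
    then have "i = 0 \<or> i = 1" by auto
    then show ?thesis using entry column True unfolding split_alloc_def by auto
  next
    case False
    then show ?thesis using outside unfolding split_alloc_def by auto
  qed
qed

lemma bundle_size_split_alloc:
  assumes "S \<subseteq> {..<m}"
  shows "bundle_size m (split_alloc m S) 0 = card S"
    and "bundle_size m (split_alloc m S) 1 = m - card S"
proof -
  have "finite S" using assms finite_subset by blast
  have "bundle_size m (split_alloc m S) 0 = card ({..<m} \<inter> S)"
    unfolding split_alloc_def by (simp add: sum.If_cases)
  then show "bundle_size m (split_alloc m S) 0 = card S"
    using assms by (simp add: Int_absorb1)
  have "bundle_size m (split_alloc m S) 1 = card ({..<m} - S)"
    unfolding split_alloc_def by (simp add: sum.If_cases Diff_eq Compl_eq)
  then show "bundle_size m (split_alloc m S) 1 = m - card S"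
    using assms \<open>finite S\<close> by (simp add: card_Diff_subset)
qed

definition penalized_welfare :: "nat \<Rightarrow> valuation \<Rightarrow> alloc \<Rightarrow> real" where
  "penalized_welfare m \<theta> A =
     - (real (bundle_size m A 0))\<^sup>2 + (\<Sum>i<2. \<Sum>j<m. \<theta> i j * real (A i j))"

definition split_value :: "nat \<Rightarrow> valuation \<Rightarrow> nat set \<Rightarrow> real" where
  "split_value m \<theta> S = (\<Sum>j<m. if j \<in> S then \<theta> 0 j else \<theta> 1 j)"

lemma penalized_welfare_split_alloc:
  assumes "S \<subseteq> {..<m}"
  shows "penalized_welfare m \<theta> (split_alloc m S) = - (real (card S))\<^sup>2 + split_value m \<theta> S"
proof -
  have "(\<Sum>i<2. \<Sum>j<m. \<theta> i j * real (split_alloc m S i j))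
      = (\<Sum>j<m. \<theta> 0 j * real (split_alloc m S 0 j) + \<theta> 1 j * real (split_alloc m S 1 j))"
    by (simp add: numeral_2_eq_2 sum.distrib)
  also have "\<dots> = split_value m \<theta> S"
    unfolding split_value_def by (rule sum.cong) (auto simp: split_alloc_def)
  finally show ?thesis
    unfolding penalized_welfare_def using bundle_size_split_alloc(1)[OF assms] by simp
qed

lemma split_value_exchange:
  assumes "j < m" "j \<notin> S" "j \<in> T"
  shows "split_value m \<theta> (insert j S) + split_value m \<theta> (T - {j})
       = split_value m \<theta> S + split_value m \<theta> T"
proof -
  have remove_j: "split_value m \<theta> U = (if j \<in> U then \<theta> 0 j else \<theta> 1 j)
      + (\<Sum>k\<in>{..<m} - {j}. if k \<in> U then \<theta> 0 k else \<theta> 1 k)" for U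
    unfolding split_value_def using assms(1) by (intro sum.remove) auto
  have "(\<Sum>k\<in>{..<m} - {j}. if k \<in> insert j S then \<theta> 0 k else \<theta> 1 k)
      = (\<Sum>k\<in>{..<m} - {j}. if k \<in> S then \<theta> 0 k else \<theta> 1 k)"
    "(\<Sum>k\<in>{..<m} - {j}. if k \<in> T - {j} then \<theta> 0 k else \<theta> 1 k)
      = (\<Sum>k\<in>{..<m} - {j}. if k \<in> T then \<theta> 0 k else \<theta> 1 k)"
    by (auto intro: sum.cong)
  then show ?thesis
    using assms by (simp add: remove_j[of "insert j S"] remove_j[of "T - {j}"] remove_j[of S] remove_j[of T])
qed

lemma optimal_split_card_le_Suc:
  assumes S: "S \<subseteq> {..<m}" and T: "T \<subseteq> {..<m}"
    and opt_S: "\<forall>B\<in>allocations 2 m. penalized_welfare m \<theta> B \<le> penalized_welfare m \<theta> (split_alloc m S)"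
    and opt_T: "\<forall>B\<in>allocations 2 m. penalized_welfare m \<theta> B \<le> penalized_welfare m \<theta> (split_alloc m T)"
  shows "card T \<le> Suc (card S)"
proof (rule ccontr)
  assume "\<not> card T \<le> Suc (card S)"
  then have gap: "card S + 2 \<le> card T" by simp
  have "finite S" "finite T" using S T finite_subset by blast+
  then have "\<not> T \<subseteq> S" using gap card_mono[of S T] by linarith
  then obtain j where j: "j \<in> T" "j \<notin> S" by blast
  with T have "j < m" by auto
  have S': "insert j S \<subseteq> {..<m}" and T': "T - {j} \<subseteq> {..<m}" using S T \<open>j < m\<close> by auto
  have card_S': "card (insert j S) = card S + 1" and card_T': "card (T - {j}) = card T - 1"
    using \<open>finite S\<close> \<open>finite T\<close> j by simp_all
  have "penalized_welfare m \<theta> (split_alloc m (insert j S)) + penalized_welfare m \<theta> (split_alloc m (T - {j}))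
      \<le> penalized_welfare m \<theta> (split_alloc m S) + penalized_welfare m \<theta> (split_alloc m T)"
    using bspec[OF opt_S split_alloc_in_allocations] bspec[OF opt_T split_alloc_in_allocations]
    by (rule add_mono)
  then have "- (real (card S) + 1)\<^sup>2 - (real (card T) - 1)\<^sup>2 \<le> - (real (card S))\<^sup>2 - (real (card T))\<^sup>2"
    using split_value_exchange[OF \<open>j < m\<close> j(2,1), of \<theta>] gap
    unfolding penalized_welfare_split_alloc[OF S] penalized_welfare_split_alloc[OF T]
      penalized_welfare_split_alloc[OF S'] penalized_welfare_split_alloc[OF T'] card_S' card_T'
    by (simp add: of_nat_diff add.commute[of 1])
  then show False using gap by (simp add: power2_eq_square algebra_simps)
qed

lemma arg_max_on_if_finite:
  fixes f :: "'a \<Rightarrow> 'b::linorder"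
  assumes "finite S" "S \<noteq> {}"
  shows "arg_max_on f S \<in> S" and "x \<in> S \<Longrightarrow> f x \<le> f (arg_max_on f S)"
proof -
  have "Max (f ` S) \<in> f ` S" using assms by simp
  then obtain x0 where "x0 \<in> S" "f x0 = Max (f ` S)" by auto
  then have max: "\<forall>y\<in>S. f y \<le> f x0" using assms by simp
  have "arg_max_on f S \<in> S \<and> (\<forall>y\<in>S. f y \<le> f (arg_max_on f S))"
    unfolding arg_max_on_def
    by (rule arg_maxI[where P = "\<lambda>x. x \<in> S" and Q = "\<lambda>x. x \<in> S \<and> (\<forall>y\<in>S. f y \<le> f x)"])
      (use \<open>x0 \<in> S\<close> max in \<open>auto simp: not_less\<close>)
  then show "arg_max_on f S \<in> S" "x \<in> S \<Longrightarrow> f x \<le> f (arg_max_on f S)" by auto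
qed

definition penalized_maximizer :: "nat \<Rightarrow> valuation \<Rightarrow> alloc" where
  "penalized_maximizer m \<theta> = arg_max_on (penalized_welfare m \<theta>) (allocations 2 m)"

lemma penalized_maximizer_optimal:
  shows "penalized_maximizer m \<theta> \<in> allocations 2 m"
    and "B \<in> allocations 2 m \<Longrightarrow> penalized_welfare m \<theta> B \<le> penalized_welfare m \<theta> (penalized_maximizer m \<theta>)"
proof -
  have "allocations 2 m \<noteq> {}" using split_alloc_in_allocations by blast
  note arg_max = arg_max_on_if_finite[OF finite_allocations this]
  show "penalized_maximizer m \<theta> \<in> allocations 2 m"
    unfolding penalized_maximizer_def by (rule arg_max(1))
  show "B \<in> allocations 2 m \<Longrightarrow> penalized_welfare m \<theta> B \<le> penalized_welfare m \<theta> (penalized_maximizer m \<theta>)"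
    unfolding penalized_maximizer_def by (rule arg_max(2))
qed

lemma affine_maximizer_penalized_maximizer: "affine_maximizer 2 m (penalized_maximizer m)"
  unfolding affine_maximizer_def
  by (intro exI[of _ "\<lambda>_. 1"] exI[of _ "\<lambda>B. - (real (bundle_size m B 0))\<^sup>2"] conjI ballI)
    (use penalized_maximizer_optimal in \<open>auto simp: penalized_welfare_def\<close>)

lemma continuous_on_penalized_welfare: "continuous_on UNIV (\<lambda>\<theta>. penalized_welfare m \<theta> A)"
proof -
  have "continuous_on UNIV (\<lambda>\<theta>::valuation. \<theta> i j)" for i j
    by (rule continuous_on_product_then_coordinatewise[OF continuous_on_product_coordinates])
  then show ?thesis unfolding penalized_welfare_def by (intro continuous_intros)
qed

lemma optimal_on_diff_set:
  fixes g :: "valuation \<Rightarrow> alloc \<Rightarrow> real"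
  assumes opt: "\<And>\<theta> B. \<theta> \<in> valuations n m \<Longrightarrow> B \<in> allocations n m \<Longrightarrow> g \<theta> B \<le> g \<theta> (f \<theta>)"
    and cont: "\<And>B. continuous_on UNIV (\<lambda>\<theta>. g \<theta> B)"
    and "\<theta> \<in> diff_set n m f A" "B \<in> allocations n m"
  shows "g \<theta> B \<le> g \<theta> A"
proof -
  have "{\<theta> \<in> valuations n m. f \<theta> = A} \<subseteq> {\<theta>. g \<theta> B \<le> g \<theta> A}"
    using opt[OF _ \<open>B \<in> allocations n m\<close>] by auto
  moreover have "closed {\<theta>. g \<theta> B \<le> g \<theta> A}"
    by (rule closed_Collect_le[OF cont cont])
  ultimately have "diff_set n m f A \<subseteq> {\<theta>. g \<theta> B \<le> g \<theta> A}"
    unfolding diff_set_def by (rule closure_minimal)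
  with \<open>\<theta> \<in> diff_set n m f A\<close> show ?thesis by blast
qed

lemma Cd_le_1_if_both_optimal:
  assumes A: "A \<in> allocations 2 m" and B: "B \<in> allocations 2 m"
    and opt_A: "\<forall>C\<in>allocations 2 m. penalized_welfare m \<theta> C \<le> penalized_welfare m \<theta> A"
    and opt_B: "\<forall>C\<in>allocations 2 m. penalized_welfare m \<theta> C \<le> penalized_welfare m \<theta> B"
    and "i < 2"
  shows "Cd m A B i \<le> 1"
proof -
  define S T where "S = {j. j < m \<and> A 0 j = 1}" and "T = {j. j < m \<and> B 0 j = 1}"
  have S: "S \<subseteq> {..<m}" and T: "T \<subseteq> {..<m}" unfolding S_def T_def by auto
  have A_eq: "A = split_alloc m S" and B_eq: "B = split_alloc m T"
    unfolding S_def T_def by (rule allocation_eq_split_alloc[OF A], rule allocation_eq_split_alloc[OF B])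
  have "card T \<le> Suc (card S)" "card S \<le> Suc (card T)"
    using optimal_split_card_le_Suc[OF S T] optimal_split_card_le_Suc[OF T S] opt_A opt_B
    unfolding A_eq B_eq by simp_all
  moreover have "card S \<le> m" "card T \<le> m"
    using card_mono[OF finite_lessThan S] card_mono[OF finite_lessThan T] by simp_all
  moreover have "i = 0 \<or> i = 1" using \<open>i < 2\<close> by auto
  ultimately show ?thesis
    unfolding Cd_def A_eq B_eq
    using bundle_size_split_alloc[OF S] bundle_size_split_alloc[OF T] by (auto simp del: of_nat_sum)
qed

lemma complex_card_sens_penalized_maximizer_le_1:
  "complex_card_sens 2 m (indiff_complex 2 m (penalized_maximizer m)) \<le> 1"
proof -
  define X where "X = {Cd m A B i | A B F i.
    F \<in> indiff_complex 2 m (penalized_maximizer m) \<and> A \<in> F \<and> B \<in> F \<and> i < 2}"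
  have "x \<le> 1" if x_in: "x \<in> X" for x
  proof -
    obtain A B F i where x: "x = Cd m A B i" and F: "F \<in> indiff_complex 2 m (penalized_maximizer m)"
      and "A \<in> F" "B \<in> F" "i < 2"
      using x_in unfolding X_def by blast
    from F obtain \<theta> where F_sub: "F \<subseteq> allocations 2 m"
      and \<theta>: "\<And>C. C \<in> F \<Longrightarrow> \<theta> \<in> diff_set 2 m (penalized_maximizer m) C"
      unfolding indiff_complex_def by blast
    have opt: "\<forall>D\<in>allocations 2 m. penalized_welfare m \<theta> D \<le> penalized_welfare m \<theta> C"
      if "C \<in> F" for C
      using optimal_on_diff_set[OF penalized_maximizer_optimal(2) continuous_on_penalized_welfare \<theta>[OF that]]
      by blast
    show ?thesis
      unfolding x using F_sub \<open>A \<in> F\<close> \<open>B \<in> F\<close> opt \<open>i < 2\<close>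
      by (intro Cd_le_1_if_both_optimal) auto
  qed
  then have "Sup X \<le> 1"
    by (cases "X = {}") (simp_all add: cSup_least)
  then show ?thesis unfolding complex_card_sens_def X_def .
qed

theorem mainTheorem9:
  fixes m :: nat
  assumes "m \<ge> 1"
  shows "mu_c 2 m = 1"
  unfolding mu_c_def
proof (rule cInf_eq_minimum)
  have "indiff_complex 2 m (penalized_maximizer m) \<in> Psi 2 m"
    unfolding Psi_def using affine_maximizer_penalized_maximizer by blast
  moreover have "1 = complex_card_sens 2 m (indiff_complex 2 m (penalized_maximizer m))"
    using complex_card_sens_penalized_maximizer_le_1
      complex_card_sens_ge_1[OF affine_maximizer_penalized_maximizer order.refl assms]
    by (rule antisym[symmetric])
  ultimately show "1 \<in> complex_card_sens 2 m ` Psi 2 m" by (rule rev_image_eqI)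
next
  fix x assume "x \<in> complex_card_sens 2 m ` Psi 2 m"
  then obtain f where "affine_maximizer 2 m f" "x = complex_card_sens 2 m (indiff_complex 2 m f)"
    unfolding Psi_def by blast
  then show "1 \<le> x" using complex_card_sens_ge_1 assms by simp
qed

end
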